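(* Let $c_1,\dots,c_k\in(0,\infty)$ be fixed constants. With probability one, there exists a tuning parameter $\lambda\in(0,\infty)^k$ such that $$\frac{\lambda}{2g'(\|Y-X\hat\beta^\lambda\|_2^2)}=\Big(c_1\|(XP_1M_1^{+})^\top\varepsilon\|_{q_1}^*,\dots,c_k\|(XP_kM_k^{+})^\top\varepsilon\|_{q_k}^*\Big)^\top.$$
   Context: Standing setup. Model: $Y=X\beta^*+\varepsilon$ with $Y\in\mathbb{R}^n$, $X\in\mathbb{R}^{n\times p}$, $\beta^*\in\mathbb{R}^p$, $\varepsilon\in\mathbb{R}^n$ (random; no distributional assumptions beyond those below). Link function $g:\mathbb{R}\to[0,\infty)$ with $g(0)=0$, $g$ continuous and strictly increasing on $[0,\infty)$, continuously differentiable on $(0,\infty)$ with strictly positive and non-increasing derivative $g'$, and such that $\alpha\mapsto g(\|\alpha\|_2^2)$ is strictly convex on $\mathbb{R}^n$. Penalty: $k\ge1$, matrices $M_1,\dots,M_k\in\mathbb{R}^{p\times p}$ with $\bigcap_{j=1}^k\mathrm{Ker}(M_j)=\{0\}$, exponents $q_j\ge1$, $\|\cdot\|_{q_j}$ the $\ell_{q_j}$-norm on $\mathbb{R}^p$, and $\|\cdot\|_{q_j}^*$ its dual norm. For $\lambda\in(0,\infty)^k$, $\hat\beta^\lambda$ denotes any element of $\arg\min_{\beta\in\mathbb{R}^p}\{g(\|Y-X\beta\|_2^2)+\sum_{j=1}^k\lambda_j\|M_j\beta\|_{q_j}\}$ (the quantity $\|Y-X\hat\beta^\lambda\|_2^2$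 does not depend on which minimizer is chosen). $A^+$ denotes the Moore–Penrose pseudoinverse; $P_1,\dots,P_k\in\mathbb{R}^{p\times p}$ are fixed projection matrices with $\sum_{j=1}^kP_jM_j^+M_j=I_{p\times p}$. Noise assumption: with probability one, $Y\neq0$ and $\min_{j}\|(XP_jM_j^{+})^\top\varepsilon\|_{q_j}^*>0$. *)

theory Defs
  imports "HOL-Analysis.Analysis" "HOL-Probability.Probability"
begin

definition strictly_convex :: "('a::real_vector \<Rightarrow> real) \<Rightarrow> bool" where
  "strictly_convex f \<longleftrightarrow>
     (\<forall>x y t. x \<noteq> y \<longrightarrow> 0 < t \<longrightarrow> t < 1 \<longrightarrow>
        f ((1 - t) *\<^sub>R x + t *\<^sub>R y) < (1 - t) * f x + t * f y)"

definition lq_norm :: "real \<Rightarrow> real^'p \<Rightarrow> real" where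
  "lq_norm q v = (\<Sum>i\<in>UNIV. \<bar>v $ i\<bar> powr q) powr (1 / q)"

definition lq_dual_norm :: "real \<Rightarrow> real^'p \<Rightarrow> real" where
  "lq_dual_norm q u = Sup {u \<bullet> v | v. lq_norm q v \<le> 1}"

definition pinv :: "real^'n^'m \<Rightarrow> real^'m^'n" where
  "pinv A = (THE B. A ** B ** A = A \<and> B ** A ** B = B \<and>
                    transpose (A ** B) = A ** B \<and> transpose (B ** A) = B ** A)"

definition kernel :: "real^'n^'m \<Rightarrow> (real^'n) set" where
  "kernel A = {x. A *v x = 0}"

definition objective ::
  "(real \<Rightarrow> real) \<Rightarrow> real^'p^'n \<Rightarrow> real^'n \<Rightarrow> ('k::finite \<Rightarrow> real^'p^'p)
   \<Rightarrow> ('k \<Rightarrow> real) \<Rightarrow> ('k \<Rightarrow> real) \<Rightarrow> real^'p \<Rightarrow> real" where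
  "objective g X Y M q lam \<beta> =
     g ((norm (Y - X *v \<beta>))\<^sup>2) + (\<Sum>j\<in>UNIV. lam j * lq_norm (q j) (M j *v \<beta>))"

definition estimators ::
  "(real \<Rightarrow> real) \<Rightarrow> real^'p^'n \<Rightarrow> real^'n \<Rightarrow> ('k::finite \<Rightarrow> real^'p^'p)
   \<Rightarrow> ('k \<Rightarrow> real) \<Rightarrow> ('k \<Rightarrow> real) \<Rightarrow> (real^'p) set" where
  "estimators g X Y M q lam =
     {\<beta>. \<forall>\<beta>'. objective g X Y M q lam \<beta> \<le> objective g X Y M q lam \<beta>'}"

end

theory Submission
  imports Defs
begin

text \<open>Fix the weights \<open>w\<^sub>j = 2 c\<^sub>j d\<^sub>j\<close>, where \<open>d\<^sub>j\<close> is the dual norm in the statement, and let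
  \<open>b\<^sub>0\<close> minimise the penalised least-squares criterion \<open>\<parallel>Y - X\<beta>\<parallel>\<^sup>2 + \<Sum>\<^sub>j w\<^sub>j \<parallel>M\<^sub>j\<beta>\<parallel>\<^sub>q\<^sub>j\<close>
  (it exists by coercivity). Its residual \<open>r\<close> is nonzero because \<open>Y \<noteq> 0\<close>, and \<open>b\<^sub>0\<close> satisfies the
  first-order variational inequality of that criterion. With \<open>s = g'(\<parallel>r\<parallel>\<^sup>2)\<close>, the tangent
  inequality of the convex function \<open>\<alpha> \<mapsto> g(\<parallel>\<alpha>\<parallel>\<^sup>2)\<close> at \<open>r\<close> turns that inequality into
  optimality of \<open>b\<^sub>0\<close> for the tuning parameter \<open>\<lambda> = s w\<close>; strict convexity forces every minimiser
  to have residual \<open>r\<close>, so \<open>\<lambda>\<^sub>j / (2 g'(\<parallel>Y - X\<beta>\<parallel>\<^sup>2)) = w\<^sub>j / 2 = c\<^sub>j d\<^sub>j\<close>.\<close>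

lemma lq_norm_nonneg: "0 \<le> lq_norm q v"
  unfolding lq_norm_def by simp

lemma lq_norm_zero [simp]: "lq_norm q 0 = 0"
  unfolding lq_norm_def by simp

lemma powr_lq_norm:
  assumes "1 \<le> q" shows "lq_norm q v powr q = (\<Sum>i\<in>UNIV. \<bar>v $ i\<bar> powr q)"
  unfolding lq_norm_def using assms by (simp add: powr_powr sum_nonneg)

lemma abs_component_le_lq_norm:
  assumes q: "1 \<le> q" shows "\<bar>v $ i\<bar> \<le> lq_norm q v"
proof -
  have "\<bar>v $ i\<bar> powr q \<le> (\<Sum>i\<in>UNIV. \<bar>v $ i\<bar> powr q)"
    by (rule member_le_sum) auto
  then have "(\<bar>v $ i\<bar> powr q) powr (1/q) \<le> lq_norm q v"
    unfolding lq_norm_def using q by (intro powr_mono2) auto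
  then show ?thesis
    using q by (simp add: powr_powr)
qed

lemma lq_norm_eq_0_iff:
  assumes "1 \<le> q" shows "lq_norm q v = 0 \<longleftrightarrow> v = 0"
proof
  assume "lq_norm q v = 0"
  then show "v = 0"
    using abs_component_le_lq_norm[OF assms, of v] by (simp add: vec_eq_iff)
qed simp

lemma lq_norm_scaleR:
  assumes q: "1 \<le> q" shows "lq_norm q (a *\<^sub>R v) = \<bar>a\<bar> * lq_norm q v"
proof -
  have "(\<Sum>i\<in>UNIV. \<bar>(a *\<^sub>R v) $ i\<bar> powr q) = \<bar>a\<bar> powr q * (\<Sum>i\<in>UNIV. \<bar>v $ i\<bar> powr q)"
    by (simp add: abs_mult powr_mult sum_distrib_left)
  then have "lq_norm q (a *\<^sub>R v) = (\<bar>a\<bar> powr q) powr (1/q) * lq_norm q v"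
    unfolding lq_norm_def by (simp add: powr_mult sum_nonneg)
  then show ?thesis
    using q by (simp add: powr_powr)
qed

lemma continuous_on_lq_norm:
  assumes q: "1 \<le> q" shows "continuous_on UNIV (lq_norm q :: real^'p \<Rightarrow> real)"
proof -
  have "continuous_on UNIV (\<lambda>v::real^'p. \<Sum>i\<in>UNIV. \<bar>v $ i\<bar> powr q)"
    using q by (auto intro!: continuous_intros continuous_on_powr')
  then show ?thesis
    unfolding lq_norm_def using q by (auto intro!: continuous_on_powr' sum_nonneg)
qed

lemma powr_convex_nonneg:
  fixes q :: real
  assumes q: "1 \<le> q" shows "convex_on {0..} (\<lambda>x. x powr q)"
proof (rule convex_onI)
  have powr_le_self: "s powr q \<le> s" if "0 \<le> s" "s \<le> 1" for s :: real
    using that q by (metis powr_mono' powr_one_gt_zero_iff powr_one_eq_one powr_one' order.refl)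
  fix t a b :: real
  assume t: "0 < t" "t < 1" and ab: "a \<in> {0..}" "b \<in> {0..}"
  consider "a = 0" | "b = 0" | "0 < a" "0 < b"
    using ab by force
  then show "((1 - t) *\<^sub>R a + t *\<^sub>R b) powr q \<le> (1 - t) * a powr q + t * b powr q"
  proof cases
    case 1
    have "(t * b) powr q = t powr q * b powr q" using t ab by (simp add: powr_mult)
    also have "\<dots> \<le> t * b powr q" using powr_le_self t by (intro mult_right_mono) auto
    finally show ?thesis using 1 q by simp
  next
    case 2
    have "((1-t) * a) powr q = (1-t) powr q * a powr q" using t ab by (simp add: powr_mult)
    also have "\<dots> \<le> (1-t) * a powr q" using powr_le_self t by (intro mult_right_mono) auto
    finally show ?thesis using 2 q by simp
  next
    case 3
    then show ?thesis using convex_onD[OF powr_convex[OF q], of t a b] t by simp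
  qed
qed simp

lemma lq_norm_triangle:
  assumes q: "1 \<le> q" shows "lq_norm q (u + v) \<le> lq_norm q u + lq_norm q v"
proof (cases "u = 0 \<or> v = 0")
  case True
  then show ?thesis by auto
next
  case False
  define a b where "a = lq_norm q u" and "b = lq_norm q v"
  have a: "0 < a" and b: "0 < b"
    using False lq_norm_nonneg[of q] lq_norm_eq_0_iff[OF q] unfolding a_def b_def
    by (metis order_le_less)+
  define t where "t = b / (a + b)"
  have t: "0 \<le> t" "t \<le> 1" "1 - t = a / (a + b)"
    using a b by (auto simp: t_def field_simps)
  define w where "w = (1 / (a + b)) *\<^sub>R (u + v)"
  \<comment> \<open>\<open>w\<close> is a convex combination of the unit vectors \<open>u / a\<close> and \<open>v / b\<close>, so by
    convexity of \<open>x powr q\<close> it lies in the unit ball.\<close>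
  have "\<bar>w $ i\<bar> powr q \<le> (1 - t) * (\<bar>u $ i\<bar> powr q / a powr q) + t * (\<bar>v $ i\<bar> powr q / b powr q)"
    for i
  proof -
    have "\<bar>w $ i\<bar> = \<bar>u $ i + v $ i\<bar> / (a + b)"
      using a b by (simp add: w_def abs_mult)
    also have "\<dots> \<le> (\<bar>u $ i\<bar> + \<bar>v $ i\<bar>) / (a + b)"
      using a b by (intro divide_right_mono abs_triangle_ineq) auto
    also have "\<dots> = (1 - t) * (\<bar>u $ i\<bar> / a) + t * (\<bar>v $ i\<bar> / b)"
      using a b t(3) by (simp add: t_def add_divide_distrib)
    finally have "\<bar>w $ i\<bar> powr q \<le> ((1 - t) * (\<bar>u $ i\<bar> / a) + t * (\<bar>v $ i\<bar> / b)) powr q"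
      using q by (intro powr_mono2) auto
    also have "\<dots> \<le> (1 - t) * (\<bar>u $ i\<bar> / a) powr q + t * (\<bar>v $ i\<bar> / b) powr q"
      using convex_onD[OF powr_convex_nonneg[OF q], of t "\<bar>u $ i\<bar> / a" "\<bar>v $ i\<bar> / b"] a b t
      by simp
    finally show ?thesis
      using a b by (simp add: powr_divide)
  qed
  then have "(\<Sum>i\<in>UNIV. \<bar>w $ i\<bar> powr q)
      \<le> (1 - t) * ((\<Sum>i\<in>UNIV. \<bar>u $ i\<bar> powr q) / a powr q) + t * ((\<Sum>i\<in>UNIV. \<bar>v $ i\<bar> powr q) / b powr q)"
    by (simp add: sum_mono sum_distrib_left sum_divide_distrib flip: sum.distrib)
  also have "\<dots> = 1"
    using a b t(3) unfolding powr_lq_norm[OF q, symmetric] a_def[symmetric] b_def[symmetric]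
    by simp
  finally have "lq_norm q w \<le> 1"
    unfolding lq_norm_def using q by (intro powr_le1) (auto simp: sum_nonneg)
  moreover have "lq_norm q w = lq_norm q (u + v) / (a + b)"
    using a b by (simp add: w_def lq_norm_scaleR[OF q])
  ultimately show ?thesis
    using a b unfolding a_def b_def by (simp add: field_simps)
qed

lemma convex_on_lq_norm_matrix_vector:
  fixes A :: "real^'n^'m"
  assumes q: "1 \<le> q" shows "convex_on UNIV (\<lambda>\<beta>. lq_norm q (A *v \<beta>))"
proof (rule convex_onI)
  fix t :: real and x y :: "real^'n"
  assume t: "0 < t" "t < 1"
  have "lq_norm q (A *v ((1 - t) *\<^sub>R x + t *\<^sub>R y))
      = lq_norm q ((1 - t) *\<^sub>R (A *v x) + t *\<^sub>R (A *v y))"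
    by (simp add: matrix_vector_right_distrib matrix_vector_mult_scaleR)
  also have "\<dots> \<le> lq_norm q ((1 - t) *\<^sub>R (A *v x)) + lq_norm q (t *\<^sub>R (A *v y))"
    using q by (rule lq_norm_triangle)
  also have "\<dots> = (1 - t) * lq_norm q (A *v x) + t * lq_norm q (A *v y)"
    using q t by (simp add: lq_norm_scaleR)
  finally show "lq_norm q (A *v ((1 - t) *\<^sub>R x + t *\<^sub>R y))
      \<le> (1 - t) * lq_norm q (A *v x) + t * lq_norm q (A *v y)" .
qed simp

lemma norm_le_card_mult_lq_norm:
  fixes v :: "real^'n"
  assumes q: "1 \<le> q" shows "norm v \<le> CARD('n) * lq_norm q v"
proof -
  have "norm v \<le> (\<Sum>i\<in>UNIV. \<bar>v $ i\<bar>)"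
    by (rule norm_le_l1_cart)
  also have "\<dots> \<le> (\<Sum>i\<in>(UNIV::'n set). lq_norm q v)"
    using q by (intro sum_mono abs_component_le_lq_norm)
  finally show ?thesis
    by simp
qed

lemma convex_on_sum_fun:
  assumes "finite I" "convex S" "\<And>i. i \<in> I \<Longrightarrow> convex_on S (f i)"
  shows "convex_on S (\<lambda>x. \<Sum>i\<in>I. f i x)"
  using assms by (induction I rule: finite_induct) (auto simp: convex_on_const)

definition penalty ::
  "('k::finite \<Rightarrow> real) \<Rightarrow> ('k \<Rightarrow> real^'p^'p) \<Rightarrow> ('k \<Rightarrow> real) \<Rightarrow> real^'p \<Rightarrow> real" where
  "penalty w M q \<beta> = (\<Sum>j\<in>UNIV. w j * lq_norm (q j) (M j *v \<beta>))"

lemma objective_scaled_weights: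
  "objective g X Y M q (\<lambda>j. s * w j) \<beta> = g ((norm (Y - X *v \<beta>))\<^sup>2) + s * penalty w M q \<beta>"
  unfolding objective_def penalty_def by (simp add: sum_distrib_left mult.assoc)

lemma penalty_zero [simp]: "penalty w M q 0 = 0"
  unfolding penalty_def by simp

lemma convex_on_penalty:
  assumes "\<forall>j. 1 \<le> q j" "\<forall>j. 0 \<le> w j"
  shows "convex_on UNIV (penalty w M q)"
  unfolding penalty_def using assms
  by (intro convex_on_sum_fun convex_on_cmul convex_on_lq_norm_matrix_vector) auto

lemma continuous_on_penalty:
  assumes q: "\<forall>j. 1 \<le> q j" shows "continuous_on UNIV (penalty w M q)"
  unfolding penalty_def
proof (intro continuous_intros)
  fix j
  have "continuous_on UNIV (lq_norm (q j) \<circ> (\<lambda>\<beta>. M j *v \<beta>))"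
    using q by (intro continuous_on_compose continuous_on_subset[OF continuous_on_lq_norm])
      (auto simp: linear_continuous_on linear_conv_bounded_linear)
  then show "continuous_on UNIV (\<lambda>\<beta>. lq_norm (q j) (M j *v \<beta>))"
    by (simp add: o_def)
qed

lemma penalty_coercive:
  fixes M :: "'k::finite \<Rightarrow> real^'p^'p"
  assumes q: "\<forall>j. 1 \<le> q j" and w: "\<forall>j. 0 < w j" and kernels: "(\<Inter>j. kernel (M j)) = {0}"
  shows "\<exists>\<kappa>>0. \<forall>\<beta>. \<kappa> * norm \<beta> \<le> penalty w M q \<beta>"
proof -
  define f where "f \<beta> = (\<chi> j. M j *v \<beta>)" for \<beta> :: "real^'p"
  have "linear f"
    unfolding f_def by (rule linearI) (simp_all add: vec_eq_iff matrix_vector_right_distrib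
      matrix_vector_mult_scaleR)
  moreover have "x = 0" if "f x = 0" for x
  proof -
    have "x \<in> (\<Inter>j. kernel (M j))"
      using that by (simp add: f_def kernel_def vec_eq_iff)
    then show ?thesis
      using kernels by simp
  qed
  ultimately obtain e where e: "e > 0" "\<And>x. e * norm x \<le> norm (f x)"
    using injective_imp_isometric[OF closed_UNIV subspace_UNIV, of f]
    by (auto simp: linear_conv_bounded_linear)
  define wmin where "wmin = Min (range w)"
  have wmin: "wmin > 0" "\<And>j. wmin \<le> w j"
    using w by (auto simp: wmin_def)
  define C where "C = real CARD('p)"
  have "e * wmin / C * norm \<beta> \<le> penalty w M q \<beta>" for \<beta>
  proof -
    have "e * norm \<beta> \<le> (\<Sum>j\<in>UNIV. norm (f \<beta> $ j))"
      using e(2)[of \<beta>] L2_set_le_sum[of UNIV "\<lambda>j. norm (f \<beta> $ j)"]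
      unfolding norm_vec_def by simp
    also have "\<dots> \<le> C * (\<Sum>j\<in>UNIV. lq_norm (q j) (M j *v \<beta>))"
      using q unfolding sum_distrib_left C_def
      by (intro sum_mono) (simp add: f_def norm_le_card_mult_lq_norm)
    finally have "e * wmin / C * norm \<beta> \<le> wmin * (\<Sum>j\<in>UNIV. lq_norm (q j) (M j *v \<beta>))"
      using wmin by (simp add: C_def field_simps mult_left_mono)
    also have "\<dots> \<le> penalty w M q \<beta>"
      unfolding penalty_def sum_distrib_left
      using wmin by (intro sum_mono mult_right_mono lq_norm_nonneg) auto
    finally show ?thesis .
  qed
  moreover have "e * wmin / C > 0"
    using e wmin by (simp add: C_def)
  ultimately show ?thesis
    by blast
qed

lemma continuous_coercive_attains_min:
  fixes f :: "'a::euclidean_space \<Rightarrow> real"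
  assumes cont: "continuous_on UNIV f" and \<kappa>: "\<kappa> > 0" and coercive: "\<And>x. \<kappa> * norm x \<le> f x"
  shows "\<exists>x0. \<forall>x. f x0 \<le> f x"
proof -
  define \<rho> where "\<rho> = f 0 / \<kappa>"
  have "0 \<le> \<rho>"
    using coercive[of 0] \<kappa> by (simp add: \<rho>_def)
  then have "cball 0 \<rho> \<noteq> {}"
    by simp
  then obtain x0 where x0: "\<And>x. x \<in> cball 0 \<rho> \<Longrightarrow> f x0 \<le> f x"
    using continuous_attains_inf[OF compact_cball _ continuous_on_subset[OF cont subset_UNIV]]
    by blast
  have "f x0 \<le> f x" for x
  proof (cases "x \<in> cball 0 \<rho>")
    case False
    then have "f 0 < \<kappa> * norm x"
      using \<kappa> by (simp add: \<rho>_def field_simps)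
    then show ?thesis
      using x0[of 0] coercive[of x] \<open>0 \<le> \<rho>\<close> by simp
  qed (rule x0)
  then show ?thesis
    by blast
qed

lemma le_mult_on_unit_interval_imp_nonpos:
  fixes A B :: real
  assumes "\<And>t. 0 < t \<Longrightarrow> t < 1 \<Longrightarrow> A \<le> t * B"
  shows "A \<le> 0"
proof (rule tendsto_lowerbound)
  show "((\<lambda>t. t * B) \<longlongrightarrow> 0) (at_right 0)"
    by (auto intro!: tendsto_eq_intros)
  have "\<forall>\<^sub>F t in at_right 0. t \<in> {0<..<1::real}"
    by (rule eventually_at_right_real) simp
  then show "\<forall>\<^sub>F t in at_right 0. A \<le> t * B"
    by eventually_elim (auto intro: assms)
qed simp

lemma penalized_least_squares_variational_ineq:
  fixes X :: "real^'p^'n" and P :: "real^'p \<Rightarrow> real"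
  assumes P: "convex_on UNIV P"
    and b0: "\<And>\<beta>. (norm (Y - X *v b0))\<^sup>2 + P b0 \<le> (norm (Y - X *v \<beta>))\<^sup>2 + P \<beta>"
  shows "2 * ((Y - X *v b0) \<bullet> (X *v (\<beta> - b0))) \<le> P \<beta> - P b0"
proof -
  define r d where "r = Y - X *v b0" and "d = X *v (\<beta> - b0)"
  \<comment> \<open>Compare \<open>b0\<close> with the points \<open>b0 + t (\<beta> - b0)\<close> and let \<open>t \<rightarrow> 0\<close>.\<close>
  have "2 * (r \<bullet> d) - (P \<beta> - P b0) \<le> t * (norm d)\<^sup>2" if t: "0 < t" "t < 1" for t
  proof -
    have res: "Y - X *v ((1 - t) *\<^sub>R b0 + t *\<^sub>R \<beta>) = r - t *\<^sub>R d"
      by (simp add: r_def d_def matrix_vector_mult_scaleR algebra_simps)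
    have "(norm r)\<^sup>2 + P b0 \<le> (norm (r - t *\<^sub>R d))\<^sup>2 + P ((1 - t) *\<^sub>R b0 + t *\<^sub>R \<beta>)"
      using b0[of "(1 - t) *\<^sub>R b0 + t *\<^sub>R \<beta>"] by (simp only: res flip: r_def)
    also have "\<dots> \<le> (norm r)\<^sup>2 - 2 * t * (r \<bullet> d) + t\<^sup>2 * (norm d)\<^sup>2 + ((1 - t) * P b0 + t * P \<beta>)"
    proof (rule add_mono)
      show "(norm (r - t *\<^sub>R d))\<^sup>2 \<le> (norm r)\<^sup>2 - 2 * t * (r \<bullet> d) + t\<^sup>2 * (norm d)\<^sup>2"
        unfolding power2_norm_eq_inner
        by (simp add: inner_diff_left inner_diff_right inner_commute power2_eq_square algebra_simps)
      show "P ((1 - t) *\<^sub>R b0 + t *\<^sub>R \<beta>) \<le> (1 - t) * P b0 + t * P \<beta>"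
        using convex_onD[OF P, of t b0 \<beta>] t by simp
    qed
    finally have "t * (2 * (r \<bullet> d) - (P \<beta> - P b0)) \<le> t * (t * (norm d)\<^sup>2)"
      by (simp add: algebra_simps power2_eq_square)
    then show ?thesis
      using t by simp
  qed
  then have "2 * (r \<bullet> d) - (P \<beta> - P b0) \<le> 0"
    by (rule le_mult_on_unit_interval_imp_nonpos)
  then show ?thesis
    by (simp add: r_def d_def)
qed

lemma strictly_convex_imp_convex_on: "strictly_convex f \<Longrightarrow> convex_on UNIV f"
  unfolding strictly_convex_def
proof (rule convex_onI)
  fix t :: real and x y
  assume "\<forall>x y t. x \<noteq> y \<longrightarrow> 0 < t \<longrightarrow> t < 1 \<longrightarrow>
      f ((1 - t) *\<^sub>R x + t *\<^sub>R y) < (1 - t) * f x + t * f y" and "0 < t" "t < 1"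
  then show "f ((1 - t) *\<^sub>R x + t *\<^sub>R y) \<le> (1 - t) * f x + t * f y"
    by (cases "x = y") (auto simp: algebra_simps less_imp_le)
qed simp

lemma convex_norm_sq_above_tangent:
  fixes r a :: "'a::real_inner"
  assumes cvx: "convex_on UNIV (\<lambda>\<alpha>::'a. g ((norm \<alpha>)\<^sup>2))"
    and deriv: "(g has_real_derivative d) (at ((norm r)\<^sup>2))"
  shows "g ((norm r)\<^sup>2) + 2 * d * (r \<bullet> (a - r)) \<le> g ((norm a)\<^sup>2)"
proof -
  define v where "v = a - r"
  define \<psi> where "\<psi> t = (norm r)\<^sup>2 + 2 * t * (r \<bullet> v) + t\<^sup>2 * (norm v)\<^sup>2" for t
  have norm_line: "(norm (r + t *\<^sub>R v))\<^sup>2 = \<psi> t" for t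
    unfolding \<psi>_def power2_norm_eq_inner
    by (simp add: inner_add_left inner_add_right inner_commute power2_eq_square algebra_simps)
  define \<phi> where "\<phi> = (\<lambda>t. g (\<psi> t))"
  have "convex_on UNIV \<phi>"
  proof (rule convex_onI)
    fix t x y :: real
    assume "0 < t" "t < 1"
    have "r + ((1 - t) *\<^sub>R x + t *\<^sub>R y) *\<^sub>R v = (1 - t) *\<^sub>R (r + x *\<^sub>R v) + t *\<^sub>R (r + y *\<^sub>R v)"
      by (simp add: algebra_simps)
    then show "\<phi> ((1 - t) *\<^sub>R x + t *\<^sub>R y) \<le> (1 - t) * \<phi> x + t * \<phi> y"
      using convex_onD[OF cvx, of t "r + x *\<^sub>R v" "r + y *\<^sub>R v"] \<open>0 < t\<close> \<open>t < 1\<close>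
      by (simp add: \<phi>_def flip: norm_line)
  qed simp
  moreover have "(\<phi> has_real_derivative d * (2 * (r \<bullet> v))) (at 0)"
  proof -
    have "(\<psi> has_real_derivative 2 * (r \<bullet> v)) (at 0)"
      unfolding \<psi>_def by (auto intro!: derivative_eq_intros)
    moreover have "(g has_real_derivative d) (at (\<psi> 0))"
      using deriv by (simp add: \<psi>_def)
    ultimately show ?thesis
      unfolding \<phi>_def by (rule DERIV_chain2[rotated])
  qed
  ultimately have "\<phi> 1 - \<phi> 0 \<ge> d * (2 * (r \<bullet> v)) * (1 - 0)"
    by (intro convex_on_imp_above_tangent) auto
  moreover have "\<psi> 1 = (norm a)\<^sup>2" "\<psi> 0 = (norm r)\<^sup>2"
    using norm_line[of 1] by (simp_all add: v_def \<psi>_def)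
  ultimately show ?thesis
    by (simp add: \<phi>_def v_def)
qed

lemma variational_ineq_imp_link_minimizer:
  fixes X :: "real^'p^'n" and P :: "real^'p \<Rightarrow> real"
  assumes cvx: "convex_on UNIV (\<lambda>\<alpha>::real^'n. g ((norm \<alpha>)\<^sup>2))"
    and deriv: "(g has_real_derivative d) (at ((norm (Y - X *v b0))\<^sup>2))" and "0 \<le> d"
    and vi: "\<And>\<beta>. 2 * ((Y - X *v b0) \<bullet> (X *v (\<beta> - b0))) \<le> P \<beta> - P b0"
  shows "g ((norm (Y - X *v b0))\<^sup>2) + d * P b0 \<le> g ((norm (Y - X *v \<beta>))\<^sup>2) + d * P \<beta>"
proof -
  define r where "r = Y - X *v b0"
  have "(Y - X *v \<beta>) - r = - (X *v (\<beta> - b0))"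
    by (simp add: r_def matrix_vector_mult_diff_distrib)
  then have "g ((norm r)\<^sup>2) - 2 * d * (r \<bullet> (X *v (\<beta> - b0))) \<le> g ((norm (Y - X *v \<beta>))\<^sup>2)"
    using convex_norm_sq_above_tangent[OF cvx deriv[folded r_def], of "Y - X *v \<beta>"] by simp
  moreover have "d * (2 * (r \<bullet> (X *v (\<beta> - b0)))) \<le> d * (P \<beta> - P b0)"
    using vi[of \<beta>] \<open>0 \<le> d\<close> unfolding r_def by (rule mult_left_mono)
  ultimately show ?thesis
    by (simp add: r_def algebra_simps)
qed

lemma minimizers_have_equal_residuals:
  fixes X :: "real^'p^'n" and Y :: "real^'n" and P :: "real^'p \<Rightarrow> real"
    and g :: "real \<Rightarrow> real" and s :: real
  defines "F \<equiv> \<lambda>\<beta>. g ((norm (Y - X *v \<beta>))\<^sup>2) + s * P \<beta>"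
  assumes sc: "strictly_convex (\<lambda>\<alpha>::real^'n. g ((norm \<alpha>)\<^sup>2))"
    and P: "convex_on UNIV P" and "0 \<le> s"
    and b1: "\<And>\<beta>. F b1 \<le> F \<beta>" and b2: "F b2 \<le> F b1"
  shows "Y - X *v b2 = Y - X *v b1"
proof (rule ccontr)
  assume ne: "Y - X *v b2 \<noteq> Y - X *v b1"
  define m where "m = (1 - 1/2) *\<^sub>R b2 + (1/2::real) *\<^sub>R b1"
  have "Y = (1/2::real) *\<^sub>R Y + (1/2::real) *\<^sub>R Y"
    by (simp flip: scaleR_add_left)
  then have res: "Y - X *v m = (1 - 1/2) *\<^sub>R (Y - X *v b2) + (1/2::real) *\<^sub>R (Y - X *v b1)"
    by (simp add: m_def matrix_vector_mult_scaleR matrix_vector_right_distrib scaleR_diff_right)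
  have "g ((norm (Y - X *v m))\<^sup>2)
      < (1 - 1/2) * g ((norm (Y - X *v b2))\<^sup>2) + (1/2) * g ((norm (Y - X *v b1))\<^sup>2)"
    unfolding res by (rule sc[unfolded strictly_convex_def, rule_format, OF ne]) auto
  moreover have "s * P m \<le> s * ((1 - 1/2) * P b2 + (1/2) * P b1)"
    using convex_onD[OF P, of "1/2" b2 b1] \<open>0 \<le> s\<close> unfolding m_def by (intro mult_left_mono) auto
  ultimately have "F m < (1 - 1/2) * F b2 + (1/2) * F b1"
    unfolding F_def by (simp add: algebra_simps)
  then show False
    using b1[of m] b2 by simp
qed

lemma exists_scale_fixing_link_derivative:
  fixes X :: "real^'p^'n" and Y :: "real^'n" and M :: "'k::finite \<Rightarrow> real^'p^'p"
    and g g' :: "real \<Rightarrow> real"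
  assumes q: "\<forall>j. 1 \<le> q j" and w: "\<forall>j. 0 < w j"
    and kernels: "(\<Inter>j. kernel (M j)) = {0}" and "Y \<noteq> 0"
    and g_deriv: "\<forall>x>0. (g has_real_derivative g' x) (at x)"
    and g'_pos: "\<forall>x>0. 0 < g' x"
    and sc: "strictly_convex (\<lambda>\<alpha>::real^'n. g ((norm \<alpha>)\<^sup>2))"
  shows "\<exists>s>0. \<forall>\<beta>\<in>estimators g X Y M q (\<lambda>j. s * w j). g' ((norm (Y - X *v \<beta>))\<^sup>2) = s"
proof -
  define P where "P = penalty w M q"
  have P: "convex_on UNIV P"
    unfolding P_def using q w by (intro convex_on_penalty) (auto simp: less_imp_le)
  obtain \<kappa> where \<kappa>: "\<kappa> > 0" "\<And>\<beta>. \<kappa> * norm \<beta> \<le> P \<beta>"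
    using penalty_coercive[OF q w kernels] unfolding P_def by blast
  have "continuous_on UNIV (\<lambda>\<beta>. (norm (Y - X *v \<beta>))\<^sup>2 + P \<beta>)"
    unfolding P_def using continuous_on_penalty[OF q]
    by (intro continuous_intros) (auto simp: linear_continuous_on linear_conv_bounded_linear)
  moreover have "\<kappa> * norm \<beta> \<le> (norm (Y - X *v \<beta>))\<^sup>2 + P \<beta>" for \<beta>
    using \<kappa>(2)[of \<beta>] by (simp add: add_increasing)
  ultimately obtain b0 where b0: "\<And>\<beta>. (norm (Y - X *v b0))\<^sup>2 + P b0 \<le> (norm (Y - X *v \<beta>))\<^sup>2 + P \<beta>"
    using continuous_coercive_attains_min[OF _ \<kappa>(1)] by blast
  note vi = penalized_least_squares_variational_ineq[OF P b0]
  define r where "r = Y - X *v b0"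
  have "r \<noteq> 0"
  proof
    assume "r = 0"
    then have "\<kappa> * norm b0 \<le> 0"
      using vi[of 0] \<kappa>(2)[of b0] by (simp add: r_def P_def)
    then have "b0 = 0"
      using \<kappa>(1) by (simp add: mult_le_0_iff)
    then show False
      using \<open>r = 0\<close> \<open>Y \<noteq> 0\<close> by (simp add: r_def)
  qed
  define s where "s = g' ((norm r)\<^sup>2)"
  have "s > 0"
    using g'_pos \<open>r \<noteq> 0\<close> by (simp add: s_def)
  have b0_opt: "g ((norm (Y - X *v b0))\<^sup>2) + s * P b0 \<le> g ((norm (Y - X *v \<beta>))\<^sup>2) + s * P \<beta>" for \<beta>
    using g_deriv \<open>r \<noteq> 0\<close> \<open>s > 0\<close> unfolding s_def r_def
    by (intro variational_ineq_imp_link_minimizer[OF strictly_convex_imp_convex_on[OF sc] _ _ vi]) auto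
  have "g' ((norm (Y - X *v \<beta>))\<^sup>2) = s" if "\<beta> \<in> estimators g X Y M q (\<lambda>j. s * w j)" for \<beta>
  proof -
    have "g ((norm (Y - X *v \<beta>))\<^sup>2) + s * P \<beta> \<le> g ((norm (Y - X *v b0))\<^sup>2) + s * P b0"
      using that unfolding estimators_def objective_scaled_weights P_def by blast
    then have "Y - X *v \<beta> = r"
      unfolding r_def using \<open>s > 0\<close>
      by (intro minimizers_have_equal_residuals[OF sc P _ b0_opt]) auto
    then show ?thesis
      by (simp add: s_def)
  qed
  then show ?thesis
    using \<open>s > 0\<close> by blast
qed

theorem lemma1:
  fixes \<Omega> :: "'w measure"
    and X :: "real^'p^'n" and \<beta>star :: "real^'p"
    and eps Y :: "'w \<Rightarrow> real^'n"
    and g g' :: "real \<Rightarrow> real"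
    and M P :: "'k::finite \<Rightarrow> real^'p^'p"
    and q c :: "'k \<Rightarrow> real"
  assumes prob: "prob_space \<Omega>"
    and model: "\<forall>\<omega>. Y \<omega> = X *v \<beta>star + eps \<omega>"
    and g_nonneg: "\<forall>x. 0 \<le> g x"
    and g0: "g 0 = 0"
    and g_cont: "continuous_on {0..} g"
    and g_mono: "strict_mono_on {0..} g"
    and g_deriv: "\<forall>x>0. (g has_real_derivative g' x) (at x)"
    and g'_cont: "continuous_on {0<..} g'"
    and g'_pos: "\<forall>x>0. 0 < g' x"
    and g'_antimono: "\<forall>x y. 0 < x \<longrightarrow> x \<le> y \<longrightarrow> g' y \<le> g' x"
    and g_strict_convex: "strictly_convex (\<lambda>\<alpha>::real^'n. g ((norm \<alpha>)\<^sup>2))"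
    and kernels: "(\<Inter>j. kernel (M j)) = {0}"
    and q_ge: "\<forall>j. 1 \<le> q j"
    and P_proj: "\<forall>j. P j ** P j = P j"
    and P_sum: "(\<Sum>j\<in>UNIV. P j ** pinv (M j) ** M j) = mat 1"
    and noise: "AE \<omega> in \<Omega>. Y \<omega> \<noteq> 0 \<and>
       (\<forall>j. 0 < lq_dual_norm (q j) (transpose (X ** P j ** pinv (M j)) *v eps \<omega>))"
    and c_pos: "\<forall>j. 0 < c j"
  shows "AE \<omega> in \<Omega>. \<exists>lam :: 'k \<Rightarrow> real. (\<forall>j. 0 < lam j) \<and>
           (\<forall>\<beta>\<in>estimators g X (Y \<omega>) M q lam. \<forall>j.
              lam j / (2 * g' ((norm (Y \<omega> - X *v \<beta>))\<^sup>2)) =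
              c j * lq_dual_norm (q j) (transpose (X ** P j ** pinv (M j)) *v eps \<omega>))"
  using noise
proof (rule eventually_mono)
  fix \<omega>
  define d where "d j = lq_dual_norm (q j) (transpose (X ** P j ** pinv (M j)) *v eps \<omega>)" for j
  assume "Y \<omega> \<noteq> 0 \<and> (\<forall>j. 0 < lq_dual_norm (q j) (transpose (X ** P j ** pinv (M j)) *v eps \<omega>))"
  then have "Y \<omega> \<noteq> 0" and w: "\<forall>j. 0 < 2 * c j * d j"
    using c_pos by (simp_all add: d_def)
  then obtain s where "s > 0" and s: "\<forall>\<beta>\<in>estimators g X (Y \<omega>) M q (\<lambda>j. s * (2 * c j * d j)).
      g' ((norm (Y \<omega> - X *v \<beta>))\<^sup>2) = s"
    using exists_scale_fixing_link_derivative[OF q_ge w kernels _ g_deriv g'_pos g_strict_convex]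
    by blast
  show "\<exists>lam. (\<forall>j. 0 < lam j) \<and> (\<forall>\<beta>\<in>estimators g X (Y \<omega>) M q lam. \<forall>j.
      lam j / (2 * g' ((norm (Y \<omega> - X *v \<beta>))\<^sup>2)) =
      c j * lq_dual_norm (q j) (transpose (X ** P j ** pinv (M j)) *v eps \<omega>))"
  proof (intro exI conjI allI ballI)
    fix j
    show "0 < s * (2 * c j * d j)"
      using \<open>s > 0\<close> w by simp
  next
    fix \<beta> j
    assume "\<beta> \<in> estimators g X (Y \<omega>) M q (\<lambda>j. s * (2 * c j * d j))"
    then show "s * (2 * c j * d j) / (2 * g' ((norm (Y \<omega> - X *v \<beta>))\<^sup>2)) =
        c j * lq_dual_norm (q j) (transpose (X ** P j ** pinv (M j)) *v eps \<omega>)"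
      using s \<open>s > 0\<close> by (simp add: d_def)
  qed
qed

end
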